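(* Let $n, a_1,\ldots,a_n$ be positive integers and let $M=M_{a_1,\ldots,a_n}=\prod_{k=1}^{n}\begin{pmatrix}0&1\\ 1&a_k\end{pmatrix}$ (product from left to right). Then $(a_1,a_2,\ldots,a_n)$ is one of the LLS periods of $M$.
   Context: Let $O=(0,0)$. For vectors $u,v\in\mathbb{R}^2$, $\det(u,v)$ is the determinant of the matrix with columns $u,v$; for points $X,Y$, $XY$ denotes the vector $Y-X$. An integer point is a point of $\mathbb{Z}^2$. All angles considered are convex angles with vertex $O$. The sail of such an angle is defined as follows: take the convex hull of all integer points in the closed angle other than $O$; the sail is the broken line formed by the boundary of this convex hull with the (possibly empty) rays lying on the edges of the angle removed (their endpoints kept). It is oriented from the first edge of the angle to the second. For a broken line $\ldots A_{k-1}A_kA_{k+1}\ldots$ (finite or infinite, vertices being the break points, with $O,A_k,A_{k+1}$ never collinear) its LLS sequence is given by $a_{2k}=\det(OA_k,OA_{k+1})$ for each edge $A_kA_{k+1}$ and $a_{2k-1}=\det(A_kA_{k-1},A_kA_{k+1})/(a_{2k-2}a_{2k})$ for each interior vertex $A_k$. The LLS sequence of an angle is the sequence of absolute values of the LLS sequence of its sail. Let $M\in\mathrm{GL}(2,\mathbb{Z})$ have two distinct real irrational eigenvalues. The complement of the union of its two eigenlines consists of four open cones; the sails of (the closures of) these cones are the sails associated to $M$ (they are bi-infinite broken lines). The LLS sequence of $M$ is the (bi-infinite) LLS sequence of an associated sail; it is known that all associated sails give the same sequence up to a shift of indices. $M^2$ maps each associated sail to itself, shifting its vertices by some number $n'\ge1$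 of positions; any block of $n'$ consecutive entries of the LLS sequence of $M$ is called an LLS period of $M$. *)

theory Defs
  imports "HOL-Analysis.Analysis"
begin

text \<open>Points / vectors of the plane are elements of real^2; integer 2x2 matrices
  are represented as real^2^2 with integer entries.\<close>

definition det2 :: "real^2 \<Rightarrow> real^2 \<Rightarrow> real" where
  "det2 u v = u$1 * v$2 - u$2 * v$1"

definition is_int_point :: "real^2 \<Rightarrow> bool" where
  "is_int_point p \<longleftrightarrow> p$1 \<in> \<int> \<and> p$2 \<in> \<int>"

definition angle_set :: "real^2 \<Rightarrow> real^2 \<Rightarrow> (real^2) set" where
  "angle_set u w = {s *\<^sub>R u + t *\<^sub>R w | s t. 0 \<le> s \<and> 0 \<le> t}"

definition sail_hull :: "real^2 \<Rightarrow> real^2 \<Rightarrow> (real^2) set" where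
  "sail_hull u w = convex hull {p. p \<in> angle_set u w \<and> is_int_point p \<and> p \<noteq> 0}"

definition sail_vertices :: "real^2 \<Rightarrow> real^2 \<Rightarrow> (real^2) set" where
  "sail_vertices u w = {p. p extreme_point_of (sail_hull u w)}"

text \<open>A bi-infinite enumeration A of the vertices of the sail of the angle (u,w),
  oriented from the first edge (u) to the second edge (w): consecutive vertices
  turn in the same rotational sense as u to w.\<close>
definition sail_param :: "real^2 \<Rightarrow> real^2 \<Rightarrow> (int \<Rightarrow> real^2) \<Rightarrow> bool" where
  "sail_param u w A \<longleftrightarrow>
     bij_betw A UNIV (sail_vertices u w) \<and> (\<forall>k. 0 < det2 u w * det2 (A k) (A (k + 1)))"

text \<open>Absolute values of the LLS sequence of the broken line with vertices A:
  entry 2k is det(OA_k, OA_(k+1)), entry 2k-1 is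
  det(A_k A_(k-1), A_k A_(k+1)) / (a_(2k-2) a_(2k)).\<close>
definition lls :: "(int \<Rightarrow> real^2) \<Rightarrow> int \<Rightarrow> real" where
  "lls A j =
     (if even j then \<bar>det2 (A (j div 2)) (A (j div 2 + 1))\<bar>
      else (let k = (j + 1) div 2 in
              \<bar>det2 (A (k - 1) - A k) (A (k + 1) - A k)\<bar> /
              (\<bar>det2 (A (k - 1)) (A k)\<bar> * \<bar>det2 (A k) (A (k + 1))\<bar>)))"

definition distinct_irrational_real_eigenvalues :: "real^2^2 \<Rightarrow> bool" where
  "distinct_irrational_real_eigenvalues M \<longleftrightarrow>
     (\<exists>l m. l \<noteq> m \<and> l \<notin> \<rat> \<and> m \<notin> \<rat> \<and>
        (\<exists>u. u \<noteq> 0 \<and> M *v u = l *\<^sub>R u) \<and> (\<exists>v. v \<noteq> 0 \<and> M *v v = m *\<^sub>R v))"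

text \<open>Closures of the four cones cut out by the eigenlines, as angles with an
  (arbitrary) ordering of their two edges: u, w are real eigenvectors of M that
  are linearly independent (hence on the two different eigenlines).\<close>
definition associated_angle :: "real^2^2 \<Rightarrow> real^2 \<Rightarrow> real^2 \<Rightarrow> bool" where
  "associated_angle M u w \<longleftrightarrow>
     det2 u w \<noteq> 0 \<and> (\<exists>l. M *v u = l *\<^sub>R u) \<and> (\<exists>m. M *v w = m *\<^sub>R w)"

definition lls_period :: "real^2^2 \<Rightarrow> nat list \<Rightarrow> bool" where
  "lls_period M xs \<longleftrightarrow>
     distinct_irrational_real_eigenvalues M \<and>
     (\<exists>u w A d. associated_angle M u w \<and> sail_param u w A \<and> d \<noteq> 0 \<and>
        (\<forall>k. (M ** M) *v A k = A (k + d)) \<and> length xs = nat \<bar>d\<bar> \<and>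
        (\<exists>j. \<forall>i < length xs. lls A (j + int i) = real (xs ! i)))"

definition lls_E :: "nat \<Rightarrow> real^2^2" where
  "lls_E a = (\<chi> i j. if i = 1 then (if j = 1 then 0 else 1)
                      else (if j = 1 then 1 else real a))"

definition lls_matrix :: "nat list \<Rightarrow> real^2^2" where
  "lls_matrix as = foldr (\<lambda>a B. lls_E a ** B) as (mat 1)"

end

theory Submission
  imports Defs
begin

text \<open>Extend \<open>a\<^sub>1, \<dots>, a\<^sub>n\<close> periodically to \<open>b : \<int> \<Rightarrow> \<nat>\<close> and let \<open>v k\<close> be the integer
  vectors with \<open>v (-1) = (1, 0)\<close>, \<open>v 0 = (0, 1)\<close> and \<open>v (k + 1) = v (k - 1) + b (k + 1) v k\<close>.
  The columns of \<open>M\<close> are \<open>v (n - 1)\<close> and \<open>v n\<close>, so by uniqueness of solutions of the recurrence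
  \<open>M v k = v (k + n)\<close>. The complete quotients of the purely periodic continued fractions of \<open>b\<close>,
  read forwards and backwards, define linear forms \<open>\<phi>\<close>, \<open>\<psi>\<close> such that \<open>\<phi> (v k)\<close> is positive
  and increasing while \<open>\<psi> (v k)\<close> alternates in sign with decreasing modulus. They are eigenforms
  of \<open>M\<close> for eigenvalues \<open>\<nu> > 1 > |\<mu>|\<close>, which are irrational because \<open>M\<close> is integral with
  determinant \<open>\<plusminus>1\<close>; hence no lattice point other than \<open>0\<close> lies on an eigenline. In the cone
  \<open>\<phi> \<ge> 0 \<ge> \<psi>\<close> every lattice point \<open>p \<noteq> 0\<close> has \<open>det (v k, p) \<ge> 1\<close> for odd \<open>k\<close>, which makes each
  \<open>v (2k)\<close> a vertex of the sail; conversely a point in the sector between \<open>v (2k)\<close> and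
  \<open>v (2k + 2)\<close> is either on the edge joining them or the midpoint of two lattice points of the
  cone. The LLS sequence of the broken line \<open>v (2k)\<close> is \<open>b (k + 2)\<close>, and \<open>M\<^sup>2\<close> shifts the
  vertices by \<open>n\<close>.\<close>

section \<open>Lattice geometry of the plane\<close>

lemma vec2_eq_iff: "(p::real^2) = q \<longleftrightarrow> p$1 = q$1 \<and> p$2 = q$2"
  by (simp add: vec_eq_iff forall_2)

lemma matrix_vector_mult_2: "((M::real^2^2) *v x) $ i = M$i$1 * x$1 + M$i$2 * x$2"
  by (simp add: matrix_vector_mult_def sum_2)

lemma matrix_vector_mult_basis_2:
  "(M::real^2^2) *v x = x$1 *\<^sub>R (M *v vector [1, 0]) + x$2 *\<^sub>R (M *v vector [0, 1])"
  by (simp add: vec2_eq_iff matrix_vector_mult_2)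

lemma cramer_2:
  assumes "det2 a b \<noteq> 0"
  shows "z = (det2 z b / det2 a b) *\<^sub>R a + (det2 a z / det2 a b) *\<^sub>R b"
proof -
  have "det2 a b *\<^sub>R z = det2 z b *\<^sub>R a + det2 a z *\<^sub>R b"
    by (simp add: vec2_eq_iff det2_def algebra_simps)
  then have "(1 / det2 a b) *\<^sub>R (det2 a b *\<^sub>R z) = (1 / det2 a b) *\<^sub>R (det2 z b *\<^sub>R a + det2 a z *\<^sub>R b)"
    by simp
  then show ?thesis
    using assms by (simp add: scaleR_add_right)
qed

lemma det2_commute: "det2 x y = - det2 y x"
  by (simp add: det2_def)

lemma det2_eq_0_imp_eq_0:
  assumes "det2 a b \<noteq> 0" "det2 a z = 0" "det2 b z = 0"
  shows "z = 0"
  using cramer_2[OF assms(1), of z] assms(2,3) by (simp add: det2_def algebra_simps)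

lemma is_int_point_add: "is_int_point p \<Longrightarrow> is_int_point q \<Longrightarrow> is_int_point (p + q)"
  and is_int_point_diff: "is_int_point p \<Longrightarrow> is_int_point q \<Longrightarrow> is_int_point (p - q)"
  and is_int_point_scaleR: "x \<in> \<int> \<Longrightarrow> is_int_point p \<Longrightarrow> is_int_point (x *\<^sub>R p)"
  and det2_Ints: "is_int_point p \<Longrightarrow> is_int_point q \<Longrightarrow> det2 p q \<in> \<int>"
  by (auto simp: is_int_point_def det2_def)

lemma Ints_pos_ge_1: "(x::real) \<in> \<int> \<Longrightarrow> 0 < x \<Longrightarrow> 1 \<le> x"
  using Ints_nonzero_abs_ge1[of x] by simp

lemma angle_set_iff_cramer:
  assumes "det2 u w \<noteq> 0"
  shows "q \<in> angle_set u w \<longleftrightarrow> 0 \<le> det2 q w / det2 u w \<and> 0 \<le> det2 u q / det2 u w"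
proof
  assume "q \<in> angle_set u w"
  then obtain s t where st: "0 \<le> s" "0 \<le> t" "q = s *\<^sub>R u + t *\<^sub>R w"
    by (auto simp: angle_set_def)
  then have "det2 q w = s * det2 u w" "det2 u q = t * det2 u w"
    by (simp_all add: det2_def algebra_simps)
  with st assms show "0 \<le> det2 q w / det2 u w \<and> 0 \<le> det2 u q / det2 u w"
    by simp
next
  assume "0 \<le> det2 q w / det2 u w \<and> 0 \<le> det2 u q / det2 u w"
  then show "q \<in> angle_set u w"
    using cramer_2[OF assms, of q] by (auto simp: angle_set_def)
qed

section \<open>Two-sided recurrences\<close>

lemma strict_mono_int_succ:
  fixes f :: "int \<Rightarrow> 'a::order"
  assumes "\<And>k. f k < f (k + 1)"
  shows "strict_mono f"
proof (rule strict_monoI)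
  fix i j :: int
  assume "i < j"
  then show "f i < f j"
    by (induction j rule: int_gr_induct) (auto intro: assms less_trans)
qed

lemma int_sign_change:
  fixes f :: "int \<Rightarrow> real"
  assumes "f i \<le> 0" "0 < f j" "i \<le> j"
  shows "\<exists>k. f k \<le> 0 \<and> 0 < f (k + 1)"
  using assms(3,2)
proof (induction j rule: int_ge_induct)
  case base
  then show ?case using assms(1) by simp
next
  case (step j)
  then show ?case by (metis not_less)
qed

lemma periodic_add_mult:
  fixes f :: "int \<Rightarrow> 'a"
  assumes "\<And>k. f (k + p) = f k"
  shows "f (k + p * q) = f k"
proof (induction q arbitrary: k rule: int_induct[where k=0])
  case (step1 q)
  then show ?case using assms[of "k + p * q"] by (simp add: algebra_simps)
next
  case (step2 q)
  then show ?case using assms[of "k + p * (q - 1)"] by (simp add: algebra_simps)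
qed simp

lemma two_step_int_induct [case_names minus_one zero up down]:
  fixes P :: "int \<Rightarrow> bool"
  assumes "P (-1)" and "P 0"
    and up: "\<And>k. P (k - 1) \<Longrightarrow> P k \<Longrightarrow> P (k + 1)"
    and down: "\<And>k. P k \<Longrightarrow> P (k + 1) \<Longrightarrow> P (k - 1)"
  shows "P k"
proof -
  have "P k \<and> P (k - 1)"
  proof (induction k rule: int_induct[where k=0])
    case base
    show ?case using assms(1,2) by simp
  next
    case (step1 i)
    then show ?case using up[of i] by simp
  next
    case (step2 i)
    then show ?case using down[of "i - 1"] by simp
  qed
  then show ?thesis ..
qed

lemma two_sided_recurrence_unique:
  fixes x y :: "int \<Rightarrow> 'a::real_vector"
  assumes "\<And>k. x (k + 1) = x (k - 1) + g (k + 1) *\<^sub>R x k"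
    and "\<And>k. y (k + 1) = y (k - 1) + g (k + 1) *\<^sub>R y k"
    and "x (-1) = y (-1)" "x 0 = y 0"
  shows "x = y"
proof
  fix k
  show "x k = y k"
  proof (induction k rule: two_step_int_induct)
    case (up k)
    then show ?case using assms(1,2)[of k] by simp
  next
    case (down k)
    then show ?case using assms(1,2)[of k] by (simp add: eq_diff_eq[symmetric])
  qed (use assms(3,4) in simp_all)
qed

function continuant_vec :: "(int \<Rightarrow> real) \<Rightarrow> int \<Rightarrow> real^2" where
  "continuant_vec g k =
     (if k = -1 then vector [1, 0] else if k = 0 then vector [0, 1]
      else if 0 < k then continuant_vec g (k - 2) + g k *\<^sub>R continuant_vec g (k - 1)
      else continuant_vec g (k + 2) - g (k + 2) *\<^sub>R continuant_vec g (k + 1))"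
  by auto
termination by (relation "Wellfounded.measure (\<lambda>(g, k). nat \<bar>2 * k + 1\<bar>)") auto

declare continuant_vec.simps [simp del]

lemma continuant_vec_initial [simp]:
  "continuant_vec g (-1) = vector [1, 0]" "continuant_vec g 0 = vector [0, 1]"
  by (simp_all add: continuant_vec.simps)

lemma continuant_vec_rec:
  "continuant_vec g (k + 1) = continuant_vec g (k - 1) + g (k + 1) *\<^sub>R continuant_vec g k"
proof -
  consider "0 \<le> k" | "k = -1" | "k = -2" | "k < -2" by linarith
  then show ?thesis
  proof cases
    case 1
    then show ?thesis by (subst continuant_vec.simps) (simp add: algebra_simps)
  next
    case 4
    then show ?thesis by (subst (2) continuant_vec.simps) (simp add: algebra_simps)
  qed (subst (2) continuant_vec.simps, simp)+
qed

lemma det2_continuant_vec: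
  "det2 (continuant_vec g k) (continuant_vec g (k + 1)) = (if even k then -1 else 1)"
proof (induction k rule: int_induct[where k="-1"])
  case base
  show ?case by (simp add: det2_def)
next
  case (step1 i)
  then show ?case
    using continuant_vec_rec[of g "i + 1"] by (simp add: det2_def algebra_simps)
next
  case (step2 i)
  then show ?case
    using continuant_vec_rec[of g i] by (simp add: det2_def algebra_simps)
qed

lemma is_int_point_continuant_vec:
  assumes "\<And>k. g k \<in> \<int>"
  shows "is_int_point (continuant_vec g k)"
proof (induction k rule: two_step_int_induct)
  case (up k)
  then show ?case
    by (simp add: continuant_vec_rec is_int_point_add is_int_point_scaleR assms)
next
  case (down k)
  then show ?case
    using continuant_vec_rec[of g k]
    by (metis add_diff_cancel_right' is_int_point_diff is_int_point_scaleR assms)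
qed (simp_all add: is_int_point_def)

section \<open>Purely periodic continued fractions\<close>

fun cf_iter :: "(int \<Rightarrow> nat) \<Rightarrow> nat \<Rightarrow> int \<Rightarrow> real \<Rightarrow> real" where
  "cf_iter b 0 j x = x"
| "cf_iter b (Suc m) j x = real (b j) + 1 / cf_iter b m (j + 1) x"

context
  fixes b :: "int \<Rightarrow> nat"
  assumes b_pos: "\<And>k. 0 < b k"
begin

lemma cf_iter_pos: "0 < x \<Longrightarrow> 0 < cf_iter b m j x"
  by (induction m arbitrary: j) (auto intro!: add_nonneg_pos)

lemma cf_iter_gt_1: "0 < x \<Longrightarrow> 0 < m \<Longrightarrow> 1 < cf_iter b m j x"
proof (cases m)
  case (Suc m')
  assume "0 < x"
  then have "0 < 1 / cf_iter b m' (j + 1) x"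
    using cf_iter_pos by simp
  moreover have "1 \<le> real (b j)"
    using b_pos[of j] by simp
  ultimately have "1 < real (b j) + 1 / cf_iter b m' (j + 1) x"
    by linarith
  then show ?thesis
    using Suc by simp
qed simp

lemma cf_iter_ge_1: "1 \<le> x \<Longrightarrow> 1 \<le> cf_iter b m j x"
  using cf_iter_gt_1[of x m j] by (cases m) auto

lemma cf_iter_le: "1 \<le> x \<Longrightarrow> cf_iter b (Suc m) j x \<le> real (b j) + 1"
  using cf_iter_ge_1[of x m "j + 1"] by simp

lemma continuous_on_cf_iter: "continuous_on {1..B} (cf_iter b m j)"
proof (induction m arbitrary: j)
  case (Suc m)
  have "\<And>x. x \<in> {1..B} \<Longrightarrow> cf_iter b m (j + 1) x \<noteq> 0"
    using cf_iter_ge_1 by (metis atLeastAtMost_iff not_one_le_zero)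
  then show ?case
    by (simp add: Suc.IH continuous_intros)
qed (simp add: continuous_on_id)

end

lemma cf_iter_periodic:
  assumes "\<And>k. b (k + int n) = b k"
  shows "cf_iter b m (j + int n * q) x = cf_iter b m j x"
proof (induction m arbitrary: j)
  case (Suc m)
  then show ?case
    using periodic_add_mult[of b "int n", OF assms, of j q] Suc.IH[of "j + 1"]
    by (simp add: algebra_simps)
qed simp

lemma cf_iter_fixed_point:
  fixes b :: "int \<Rightarrow> nat"
  assumes n: "0 < n" and pos: "\<And>k. 0 < b k"
  obtains x where "1 < x" "cf_iter b n j x = x"
proof -
  define F where "F = cf_iter b n j"
  define B where "B = real (b j) + 2"
  have "1 < F 1"
    unfolding F_def using cf_iter_gt_1[of b, OF pos, where x=1 and m=n and j=j] n by simp
  moreover have "F B < B"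
    using cf_iter_le[of b, OF pos, where x=B and m="n - 1" and j=j] n by (simp add: F_def B_def)
  moreover have "continuous_on {1..B} (\<lambda>x. x - F x)"
    unfolding F_def by (intro continuous_intros continuous_on_cf_iter[of b] pos)
  ultimately obtain x where x: "1 \<le> x" "x \<le> B" "x - F x = 0"
    using IVT'[of "\<lambda>x. x - F x" 1 0 B] by (force simp: B_def)
  with \<open>1 < F 1\<close> have "1 < x"
    by (cases "x = 1") auto
  with x(3) show ?thesis
    using that by (simp add: F_def)
qed

lemma periodic_continued_fraction:
  fixes b :: "int \<Rightarrow> nat"
  assumes n: "0 < n" and per: "\<And>k. b (k + int n) = b k" and pos: "\<And>k. 0 < b k"
  obtains \<alpha> where "\<And>k. 1 < \<alpha> k" "\<And>k. \<alpha> k = real (b k) + 1 / \<alpha> (k + 1)"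
    "\<And>k. \<alpha> (k + int n) = \<alpha> k"
proof -
  obtain x where x: "1 < x" "cf_iter b n 1 x = x"
    using cf_iter_fixed_point[OF n pos] .
  \<comment> \<open>\<open>\<alpha> k\<close> unrolls the \<open>r k \<in> {1..n}\<close> partial quotients from index \<open>k\<close> up to the next index
     \<open>\<equiv> 1 (mod n)\<close>, where the fixed point \<open>x = \<alpha> 1\<close> takes over.\<close>
  define r where "r k = n - nat ((k - 1) mod int n)" for k
  define \<alpha> where "\<alpha> k = cf_iter b (r k) k x" for k
  show ?thesis
  proof
    fix k
    have "0 < r k"
      using n by (simp add: r_def nat_less_iff)
    then show "1 < \<alpha> k"
      unfolding \<alpha>_def using cf_iter_gt_1[of b, OF pos] x(1) by simp
    have "(k + int n - 1) mod int n = (k - 1) mod int n"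
      by (metis add.commute add_diff_eq mod_add_self2)
    then show "\<alpha> (k + int n) = \<alpha> k"
      unfolding \<alpha>_def r_def using cf_iter_periodic[of b n, OF per, of _ k 1] by simp
    show "\<alpha> k = real (b k) + 1 / \<alpha> (k + 1)"
    proof (cases "k mod int n = 0")
      case True
      have "(k - 1) mod int n = - 1 mod int n"
        using True mod_diff_left_eq[of k "int n" 1] by simp
      then have "r k = 1" "r (k + 1) = n"
        using n True by (simp_all add: r_def zmod_minus1)
      moreover have "k + 1 = 1 + int n * (k div int n)"
        using True by (metis add.commute add_0 mult_div_mod_eq)
      ultimately show ?thesis
        using cf_iter_periodic[of b n, OF per, of n 1 "k div int n" x] x(2)
        by (simp add: \<alpha>_def add.commute)
    next
      case False
      have "0 \<le> k mod int n - 1" "k mod int n - 1 < int n"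
        using False n pos_mod_sign[of "int n" k] pos_mod_bound[of "int n" k] by linarith+
      then have "(k - 1) mod int n = k mod int n - 1"
        using mod_diff_left_eq[of k "int n" 1] by simp
      with \<open>0 \<le> k mod int n - 1\<close> \<open>k mod int n - 1 < int n\<close> have "r k = Suc (r (k + 1))"
        by (simp add: r_def)
      then show ?thesis
        by (simp add: \<alpha>_def)
    qed
  qed
qed

lemma periodic_continued_fraction_backward:
  fixes b :: "int \<Rightarrow> nat"
  assumes n: "0 < n" and per: "\<And>k. b (k + int n) = b k" and pos: "\<And>k. 0 < b k"
  obtains \<beta> where "\<And>k. 1 < \<beta> k" "\<And>k. \<beta> k = real (b (k + 1)) + 1 / \<beta> (k - 1)"
    "\<And>k. \<beta> (k + int n) = \<beta> k"
proof -
  have "b (1 - (k + int n)) = b (1 - k)" for k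
    using per[of "1 - (k + int n)"] by simp
  then obtain \<gamma> where \<gamma>: "\<And>k. 1 < \<gamma> k" "\<And>k. \<gamma> k = real (b (1 - k)) + 1 / \<gamma> (k + 1)"
    "\<And>k. \<gamma> (k + int n) = \<gamma> k"
    using periodic_continued_fraction[of n "\<lambda>k. b (1 - k)"] n pos by blast
  show ?thesis
  proof (rule that[of "\<lambda>k. \<gamma> (- k)"])
    fix k
    show "1 < \<gamma> (- k)"
      by (rule \<gamma>(1))
    show "\<gamma> (- k) = real (b (k + 1)) + 1 / \<gamma> (- (k - 1))"
      using \<gamma>(2)[of "- k"] by (simp add: add.commute)
    show "\<gamma> (- (k + int n)) = \<gamma> (- k)"
      using \<gamma>(3)[of "- k - int n"] by simp
  qed
qed

section \<open>Integral unimodular matrices\<close>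

definition int_matrix :: "real^2^2 \<Rightarrow> bool" where
  "int_matrix M \<longleftrightarrow> (\<forall>i j. M$i$j \<in> \<int>)"

lemma int_matrix_mult: "int_matrix A \<Longrightarrow> int_matrix B \<Longrightarrow> int_matrix (A ** B)"
  by (simp add: int_matrix_def matrix_matrix_mult_def sum_2 Ints_add Ints_mult)

lemma int_matrix_lls_matrix: "int_matrix (lls_matrix as)"
proof (induction as)
  case Nil
  then show ?case by (simp add: lls_matrix_def int_matrix_def mat_def)
next
  case (Cons a as)
  have "int_matrix (lls_E a)"
    by (simp add: int_matrix_def lls_E_def)
  with Cons show ?case
    by (simp add: lls_matrix_def int_matrix_mult)
qed

lemma det_lls_E: "det (lls_E a) = -1"
  by (simp add: det_2 lls_E_def)

lemma det_lls_matrix: "det (lls_matrix as) = (-1) ^ length as"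
  by (induction as) (simp_all add: lls_matrix_def det_mul det_lls_E det_I)

lemma eigenvalue_quadratic:
  fixes M :: "real^2^2"
  assumes "M *v q = l *\<^sub>R q" "q \<noteq> 0"
  shows "l\<^sup>2 - (M$1$1 + M$2$2) * l + det M = 0"
proof -
  have e1: "M$1$1 * q$1 + M$1$2 * q$2 = l * q$1" and e2: "M$2$1 * q$1 + M$2$2 * q$2 = l * q$2"
    using assms(1) by (simp_all add: vec2_eq_iff matrix_vector_mult_2)
  have "(l\<^sup>2 - (M$1$1 + M$2$2) * l + det M) * q$1 = 0"
    "(l\<^sup>2 - (M$1$1 + M$2$2) * l + det M) * q$2 = 0"
    using e1 e2 unfolding det_2 by algebra+
  moreover have "q$1 \<noteq> 0 \<or> q$2 \<noteq> 0"
    using assms(2) by (simp add: vec2_eq_iff)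
  ultimately show ?thesis by auto
qed

lemma rational_root_monic_int_quadratic:
  fixes x :: real
  assumes x: "x \<in> \<rat>" and eq: "x\<^sup>2 - of_int T * x + of_int D = 0"
  shows "x \<in> \<int>"
proof -
  obtain a b where ab: "0 < b" "coprime a b" "x = of_int a / of_int b"
    using Rats_cases'[OF x] by blast
  have "real_of_int (a\<^sup>2 - T * a * b + D * b\<^sup>2) = real_of_int b ^ 2 * (x\<^sup>2 - of_int T * x + of_int D)"
    using ab(1) unfolding ab(3) by (simp add: field_simps power2_eq_square)
  also have "\<dots> = 0"
    using eq by simp
  finally have "a\<^sup>2 - T * a * b + D * b\<^sup>2 = 0"
    by (simp only: of_int_eq_0_iff)
  then have "a\<^sup>2 = b * (T * a - D * b)"
    by (simp add: algebra_simps power2_eq_square)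
  then have "b dvd a\<^sup>2" by simp
  moreover have "coprime (a\<^sup>2) b"
    using ab(2) by simp
  ultimately have "is_unit b"
    using coprime_absorb_right by blast
  with ab(1) have "b = 1"
    by simp
  then show ?thesis
    using ab(3) by simp
qed

lemma int_matrix_rational_eigenvalue:
  assumes "int_matrix M" "is_int_point q" "q \<noteq> 0" "M *v q = l *\<^sub>R q"
  shows "l \<in> \<rat>"
proof -
  have "(M *v q)$i \<in> \<int>" "q$i \<in> \<int>" for i
    using assms(1,2) exhaust_2[of i]
    by (auto simp: int_matrix_def is_int_point_def matrix_vector_mult_2 Ints_add Ints_mult)
  then have int: "(M *v q)$i \<in> \<rat>" "q$i \<in> \<rat>" for i
    using Ints_subset_Rats by blast+
  obtain i where "q$i \<noteq> 0"
    using assms(3) by (auto simp: vec_eq_iff)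
  then have "l = (M *v q)$i / q$i"
    using assms(4) by simp
  then show ?thesis
    using int by simp
qed

lemma unimodular_rational_eigenvalue:
  assumes "int_matrix M" "\<bar>det M\<bar> = 1" "M *v q = l *\<^sub>R q" "q \<noteq> 0" "l \<in> \<rat>"
  shows "\<bar>l\<bar> = 1"
proof -
  obtain T where T: "M$1$1 + M$2$2 = of_int T"
    using assms(1) unfolding int_matrix_def by (meson Ints_add Ints_cases)
  obtain D where D: "det M = of_int D"
    using assms(1) unfolding int_matrix_def det_2 by (meson Ints_diff Ints_mult Ints_cases)
  have root: "l\<^sup>2 - of_int T * l + of_int D = 0"
    using eigenvalue_quadratic[OF assms(3,4)] T D by simp
  then obtain i where i: "l = of_int i"
    using rational_root_monic_int_quadratic[OF assms(5) root] by (auto elim: Ints_cases)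
  with root have "of_int (i * (T - i)) = (of_int D :: real)"
    by (simp add: algebra_simps power2_eq_square)
  then have "\<bar>i * (T - i)\<bar> = 1"
    using assms(2) D by (metis of_int_abs of_int_eq_1_iff)
  then show ?thesis
    using i abs_zmult_eq_1 by fastforce
qed

lemma lls_E_basis:
  "lls_E a *v vector [1, 0] = vector [0, 1]"
  "lls_E a *v vector [0, 1] = vector [1, real a]"
  by (simp_all add: vec2_eq_iff matrix_vector_mult_2 lls_E_def)

lemma foldr_lls_E_snoc:
  "foldr (\<lambda>a B. lls_E a ** B) (xs @ [y]) (mat 1) = foldr (\<lambda>a B. lls_E a ** B) xs (mat 1) ** lls_E y"
  by (induction xs) (simp_all add: matrix_mul_assoc)

section \<open>Extreme points\<close>

lemma convex_insert_superlevel: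
  fixes g :: "'a::real_vector \<Rightarrow> real"
  assumes g: "linear g"
  shows "convex (insert v {x. g v < g x})"
proof (rule convexI)
  fix x y :: 'a and u w :: real
  assume "x \<in> insert v {x. g v < g x}" "y \<in> insert v {x. g v < g x}" and uw: "0 \<le> u" "0 \<le> w" "u + w = 1"
  then have x: "g v \<le> g x" "x \<noteq> v \<Longrightarrow> g v < g x" and y: "g v \<le> g y" "y \<noteq> v \<Longrightarrow> g v < g y"
    by auto
  show "u *\<^sub>R x + w *\<^sub>R y \<in> insert v {x. g v < g x}"
  proof (cases "u *\<^sub>R x + w *\<^sub>R y = v")
    case False
    have "x \<noteq> v \<and> 0 < u \<or> y \<noteq> v \<and> 0 < w"
    proof (rule ccontr)
      assume "\<not> ?thesis"
      then have "(x = v \<or> u = 0) \<and> (y = v \<or> w = 0)"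
        using uw by auto
      then have "u *\<^sub>R x + w *\<^sub>R y = v"
        using uw by (metis add.commute add_0 scaleR_add_left scaleR_one scaleR_zero_left)
      with False show False ..
    qed
    then have "u * g v + w * g v < u * g x + w * g y"
    proof
      assume "x \<noteq> v \<and> 0 < u"
      then have "u * g v < u * g x"
        using x by simp
      moreover have "w * g v \<le> w * g y"
        using y uw by (simp add: mult_left_mono)
      ultimately show ?thesis
        by linarith
    next
      assume "y \<noteq> v \<and> 0 < w"
      then have "w * g v < w * g y"
        using y by simp
      moreover have "u * g v \<le> u * g x"
        using x uw by (simp add: mult_left_mono)
      ultimately show ?thesis
        by linarith
    qed
    moreover have "g (u *\<^sub>R x + w *\<^sub>R y) = u * g x + w * g y"
      using g by (simp add: linear_add linear_scale)
    ultimately show ?thesis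
      using uw by (simp flip: distrib_right)
  qed simp
qed

lemma extreme_point_of_convex_hull_strict_minimizer:
  fixes g :: "'a::real_vector \<Rightarrow> real"
  assumes g: "linear g" and "v \<in> S" and min: "\<And>x. x \<in> S \<Longrightarrow> x \<noteq> v \<Longrightarrow> g v < g x"
  shows "v extreme_point_of (convex hull S)"
proof -
  have "S \<subseteq> insert v {x. g v < g x}"
    using min by auto
  with convex_insert_superlevel[OF g] have "convex hull S \<subseteq> insert v {x. g v < g x}"
    by (simp add: hull_minimal)
  then have "convex hull S - {v} = convex hull S \<inter> g -` {g v<..}"
    by auto
  moreover have "convex (g -` {g v<..})"
    by (rule convex_linear_vimage[OF g convex_real_interval(3)])
  ultimately have "convex (convex hull S - {v})"
    by (simp add: convex_Int)
  moreover have "v \<in> convex hull S"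
    using assms(2) by (rule hull_inc)
  ultimately show ?thesis
    by (simp add: extreme_point_of_stillconvex)
qed

lemma not_extreme_point_of_midpoint:
  assumes "p - w \<in> A" "p + w \<in> A" "w \<noteq> 0"
  shows "\<not> p extreme_point_of A"
proof -
  have "p = midpoint (p - w) (p + w)"
    by (simp add: midpoint_def scaleR_2)
  moreover have "p - w \<noteq> p + w"
  proof
    assume "p - w = p + w"
    then have "2 *\<^sub>R w = 0"
      by (simp add: scaleR_2 algebra_simps)
    with assms(3) show False
      by simp
  qed
  ultimately have "p \<in> open_segment (p - w) (p + w)"
    by (metis midpoint_in_open_segment)
  then show ?thesis
    using assms(1,2) by (auto simp: extreme_point_of_def)
qed

section \<open>The sail of \<open>lls_matrix as\<close>\<close>

locale lls_list =
  fixes as :: "nat list"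
  assumes as_nonempty: "as \<noteq> []" and as_pos: "\<forall>a \<in> set as. 0 < a"
begin

abbreviation period :: int where
  "period \<equiv> int (length as)"

definition b :: "int \<Rightarrow> nat" where
  "b k = as ! nat ((k - 1) mod period)"

lemma b_periodic: "b (k + period) = b k"
proof -
  have "(k + period - 1) mod period = (k - 1 + period) mod period"
    by (simp add: algebra_simps)
  also have "\<dots> = (k - 1) mod period"
    by (rule mod_add_self2)
  finally show ?thesis
    by (simp add: b_def)
qed

lemma b_nth: "i < length as \<Longrightarrow> b (int i + 1) = as ! i"
  by (simp add: b_def)

lemma b_pos: "0 < b k"
proof -
  have "nat ((k - 1) mod period) < length as"
    using as_nonempty by (simp add: nat_less_iff)
  then show ?thesis
    using as_pos by (simp add: b_def)
qed

lemma b_ge_1: "1 \<le> real (b k)"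
  using b_pos[of k] by simp

definition v :: "int \<Rightarrow> real^2" where
  "v = continuant_vec (\<lambda>k. real (b k))"

lemma v_initial [simp]: "v (-1) = vector [1, 0]" "v 0 = vector [0, 1]"
  by (simp_all add: v_def)

lemma v_rec: "v (k + 1) = v (k - 1) + real (b (k + 1)) *\<^sub>R v k"
  unfolding v_def by (rule continuant_vec_rec)

lemma v_step2: "v (k + 2) - v k = real (b (k + 2)) *\<^sub>R v (k + 1)"
  using v_rec[of "k + 1"] by (simp add: add.assoc)

lemma det2_v: "det2 (v k) (v (k + 1)) = (if even k then -1 else 1)"
  unfolding v_def by (rule det2_continuant_vec)

lemma det2_v_step2: "det2 (v k) (v (k + 2)) = real (b (k + 2)) * det2 (v k) (v (k + 1))"
  using v_step2[of k] by (simp add: det2_def eq_diff_eq algebra_simps)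

lemma abs_det2_v_step2: "\<bar>det2 (v k) (v (k + 2))\<bar> = real (b (k + 2))"
  by (simp add: det2_v_step2 det2_v)

lemma is_int_point_v: "is_int_point (v k)"
  unfolding v_def by (rule is_int_point_continuant_vec) simp

lemma lls_matrix_prefix:
  assumes "m \<le> length as"
  shows "foldr (\<lambda>a B. lls_E a ** B) (take m as) (mat 1) *v vector [1, 0] = v (int m - 1) \<and>
    foldr (\<lambda>a B. lls_E a ** B) (take m as) (mat 1) *v vector [0, 1] = v (int m)"
  using assms
proof (induction m)
  case (Suc m)
  define P where "P = foldr (\<lambda>a B. lls_E a ** B) (take m as) (mat 1)"
  have m: "m < length as"
    using Suc.prems by simp
  then have "foldr (\<lambda>a B. lls_E a ** B) (take (Suc m) as) (mat 1) = P ** lls_E (as ! m)"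
    by (simp add: take_Suc_conv_app_nth P_def foldr_lls_E_snoc del: foldr_append)
  moreover have IH: "P *v vector [1, 0] = v (int m - 1)" "P *v vector [0, 1] = v (int m)"
    using Suc m by (simp_all add: P_def)
  moreover have "(P ** lls_E (as ! m)) *v vector [1, 0] = v (int m)"
    by (simp add: matrix_vector_mul_assoc[symmetric] lls_E_basis IH)
  moreover have "vector [1, real (as ! m)] = vector [1, 0] + real (as ! m) *\<^sub>R (vector [0, 1] :: real^2)"
    by (simp add: vec2_eq_iff)
  then have "(P ** lls_E (as ! m)) *v vector [0, 1] = v (int m + 1)"
    using v_rec[of "int m"] b_nth[OF m]
    by (simp add: matrix_vector_mul_assoc[symmetric] lls_E_basis matrix_vector_right_distrib
        matrix_vector_mult_scaleR IH)
  ultimately show ?case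
    by (simp add: add.commute)
qed simp

lemma lls_matrix_v: "lls_matrix as *v v k = v (k + period)"
proof -
  have "(\<lambda>k. lls_matrix as *v v k) = (\<lambda>k. v (k + period))"
  proof (rule two_sided_recurrence_unique[where g="\<lambda>k. real (b k)"])
    fix k
    show "lls_matrix as *v v (k + 1) = lls_matrix as *v v (k - 1) + real (b (k + 1)) *\<^sub>R (lls_matrix as *v v k)"
      by (simp add: v_rec matrix_vector_right_distrib matrix_vector_mult_scaleR)
    have "v (k + period + 1) = v (k + period - 1) + real (b (k + 1)) *\<^sub>R v (k + period)"
      using v_rec[of "k + period"] b_periodic[of "k + 1"] by (simp add: algebra_simps)
    then show "v (k + 1 + period) = v (k - 1 + period) + real (b (k + 1)) *\<^sub>R v (k + period)"
      by (simp add: algebra_simps)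
  next
    show "lls_matrix as *v v (-1) = v (-1 + period)" "lls_matrix as *v v 0 = v (0 + period)"
      using lls_matrix_prefix[of "length as"] by (simp_all add: lls_matrix_def)
  qed
  then show ?thesis
    by (rule fun_cong)
qed

text \<open>The complete quotients \<open>\<alpha> k = [b k; b (k + 1), b (k + 2), \<dots>]\<close> and
  \<open>\<beta> k = [b (k + 1); b k, b (k - 1), \<dots>]\<close> of the two periodic continued fractions of \<open>b\<close>.\<close>
definition \<alpha> :: "int \<Rightarrow> real" where
  "\<alpha> = (SOME \<alpha>. (\<forall>k. 1 < \<alpha> k) \<and> (\<forall>k. \<alpha> k = real (b k) + 1 / \<alpha> (k + 1)) \<and>
     (\<forall>k. \<alpha> (k + period) = \<alpha> k))"

definition \<beta> :: "int \<Rightarrow> real" where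
  "\<beta> = (SOME \<beta>. (\<forall>k. 1 < \<beta> k) \<and> (\<forall>k. \<beta> k = real (b (k + 1)) + 1 / \<beta> (k - 1)) \<and>
     (\<forall>k. \<beta> (k + period) = \<beta> k))"

lemma \<alpha>: "1 < \<alpha> k" "\<alpha> k = real (b k) + 1 / \<alpha> (k + 1)" "\<alpha> (k + period) = \<alpha> k"
proof -
  have "\<exists>\<alpha>. (\<forall>k. 1 < \<alpha> k) \<and> (\<forall>k. \<alpha> k = real (b k) + 1 / \<alpha> (k + 1)) \<and> (\<forall>k. \<alpha> (k + period) = \<alpha> k)"
    by (rule periodic_continued_fraction[of "length as" b]) (use as_nonempty b_periodic b_pos in blast)+
  then have h: "(\<forall>k. 1 < \<alpha> k) \<and> (\<forall>k. \<alpha> k = real (b k) + 1 / \<alpha> (k + 1)) \<and> (\<forall>k. \<alpha> (k + period) = \<alpha> k)"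
    unfolding \<alpha>_def by (rule someI_ex)
  show "1 < \<alpha> k" "\<alpha> k = real (b k) + 1 / \<alpha> (k + 1)" "\<alpha> (k + period) = \<alpha> k"
    using h by blast+
qed

lemma \<beta>: "1 < \<beta> k" "\<beta> k = real (b (k + 1)) + 1 / \<beta> (k - 1)" "\<beta> (k + period) = \<beta> k"
proof -
  have "\<exists>\<beta>. (\<forall>k. 1 < \<beta> k) \<and> (\<forall>k. \<beta> k = real (b (k + 1)) + 1 / \<beta> (k - 1)) \<and> (\<forall>k. \<beta> (k + period) = \<beta> k)"
    by (rule periodic_continued_fraction_backward[of "length as" b]) (use as_nonempty b_periodic b_pos in blast)+
  then have h: "(\<forall>k. 1 < \<beta> k) \<and> (\<forall>k. \<beta> k = real (b (k + 1)) + 1 / \<beta> (k - 1)) \<and> (\<forall>k. \<beta> (k + period) = \<beta> k)"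
    unfolding \<beta>_def by (rule someI_ex)
  show "1 < \<beta> k" "\<beta> k = real (b (k + 1)) + 1 / \<beta> (k - 1)" "\<beta> (k + period) = \<beta> k"
    using h by blast+
qed

definition \<phi> :: "real^2 \<Rightarrow> real" where
  "\<phi> x = x$1 + \<beta> (-1) * x$2"

definition \<psi> :: "real^2 \<Rightarrow> real" where
  "\<psi> x = x$1 - x$2 / \<alpha> 1"

lemma linear_\<phi>: "linear \<phi>" and linear_\<psi>: "linear \<psi>"
  by (auto intro!: linearI simp: \<phi>_def \<psi>_def algebra_simps diff_divide_distrib add_divide_distrib)

lemmas \<phi>_simps [simp] = linear_0[OF linear_\<phi>] linear_add[OF linear_\<phi>] linear_diff[OF linear_\<phi>]
    linear_scale[OF linear_\<phi>]
  and \<psi>_simps [simp] = linear_0[OF linear_\<psi>] linear_add[OF linear_\<psi>] linear_diff[OF linear_\<psi>]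
    linear_scale[OF linear_\<psi>]

definition \<sigma> :: real where
  "\<sigma> = \<beta> (-1) + 1 / \<alpha> 1"

lemma \<sigma>_pos: "0 < \<sigma>"
  using \<alpha>(1)[of 1] \<beta>(1)[of "-1"] by (simp add: \<sigma>_def add_pos_pos)

lemma det2_\<phi>_\<psi>: "\<sigma> * det2 x y = \<psi> x * \<phi> y - \<phi> x * \<psi> y"
  using \<alpha>(1)[of 1] by (simp add: \<sigma>_def det2_def \<phi>_def \<psi>_def field_simps)

lemma \<phi>_\<psi>_eq_0_imp: "\<phi> z = 0 \<Longrightarrow> \<psi> z = 0 \<Longrightarrow> z = 0"
proof -
  assume "\<phi> z = 0" "\<psi> z = 0"
  then have "\<sigma> * z$2 = 0"
    by (simp add: \<sigma>_def \<phi>_def \<psi>_def algebra_simps)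
  then have "z$2 = 0"
    using \<sigma>_pos by simp
  with \<open>\<phi> z = 0\<close> show "z = 0"
    by (simp add: \<phi>_def vec2_eq_iff)
qed

definition c :: "int \<Rightarrow> real" where
  "c k = \<phi> (v k)"

definition d :: "int \<Rightarrow> real" where
  "d k = \<psi> (v k)"

lemma c_initial: "c (-1) = 1" "c 0 = \<beta> (-1)"
  and d_initial: "d (-1) = 1" "d 0 = - 1 / \<alpha> 1"
  by (simp_all add: c_def d_def \<phi>_def \<psi>_def)

lemma c_rec: "c (k + 1) = c (k - 1) + real (b (k + 1)) * c k"
  and d_rec: "d (k + 1) = d (k - 1) + real (b (k + 1)) * d k"
  by (simp_all add: c_def d_def v_rec)

text \<open>The ratios of consecutive terms of \<open>c\<close> and \<open>d\<close> are the periodic sequences \<open>\<beta> k\<close> and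
  \<open>- 1 / \<alpha> (k + 2)\<close>; this is what makes \<open>\<phi>\<close> and \<open>\<psi>\<close> eigenforms of \<open>lls_matrix as\<close>.\<close>
lemma c_succ: "c (k + 1) = \<beta> k * c k"
proof (induction k rule: int_induct[where k="-1"])
  case base
  show ?case by (simp add: c_initial)
next
  case (step1 i)
  have "c (i + 1 + 1) = c i + real (b (i + 2)) * c (i + 1)"
    using c_rec[of "i + 1"] by (simp add: add.assoc)
  also have "\<dots> = (real (b (i + 2)) * \<beta> i + 1) * c i"
    using step1.IH by (simp add: algebra_simps)
  also have "real (b (i + 2)) * \<beta> i + 1 = \<beta> (i + 1) * \<beta> i"
    using \<beta>(2)[of "i + 1"] \<beta>(1)[of i] by (simp add: field_simps add.assoc)
  finally show ?case
    using step1.IH by simp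
next
  case (step2 i)
  have "c (i - 1) = (\<beta> i - real (b (i + 1))) * c i"
    using c_rec[of i] step2.IH by (simp add: algebra_simps)
  also have "\<beta> i - real (b (i + 1)) = 1 / \<beta> (i - 1)"
    using \<beta>(2)[of i] by simp
  finally show ?case
    using \<beta>(1)[of "i - 1"] by (simp add: field_simps)
qed

lemma d_succ: "d (k + 1) = - d k / \<alpha> (k + 2)"
proof (induction k rule: int_induct[where k="-1"])
  case base
  show ?case by (simp add: d_initial)
next
  case (step1 i)
  have "d i = - \<alpha> (i + 2) * d (i + 1)"
    using step1.IH \<alpha>(1)[of "i + 2"] by (simp add: field_simps)
  then have "d (i + 1 + 1) = (real (b (i + 2)) - \<alpha> (i + 2)) * d (i + 1)"
    using d_rec[of "i + 1"] by (simp add: algebra_simps add.assoc)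
  also have "real (b (i + 2)) - \<alpha> (i + 2) = - 1 / \<alpha> (i + 1 + 2)"
    using \<alpha>(2)[of "i + 2"] by (simp add: add.assoc)
  finally show ?case
    by simp
next
  case (step2 i)
  have "d (i - 1) = - (real (b (i + 1)) + 1 / \<alpha> (i + 2)) * d i"
    using d_rec[of i] step2.IH by (simp add: algebra_simps)
  also have "real (b (i + 1)) + 1 / \<alpha> (i + 2) = \<alpha> (i + 1)"
    using \<alpha>(2)[of "i + 1"] by (simp add: add.assoc)
  finally show ?case
    using \<alpha>(1)[of "i + 1"] by (simp add: field_simps)
qed

lemma c_pos: "0 < c k"
proof (induction k rule: int_induct[where k="-1"])
  case (step1 i)
  then show ?case using c_succ[of i] \<beta>(1)[of i] by simp
next
  case (step2 i)
  then show ?case using c_succ[of "i - 1"] \<beta>(1)[of "i - 1"] by (simp add: zero_less_mult_iff)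
qed (simp add: c_initial)

lemma strict_mono_c: "strict_mono c"
  by (rule strict_mono_int_succ) (use c_succ c_pos \<beta>(1) in simp)

lemma d_sign: "if even k then d k < 0 else 0 < d k"
proof (induction k rule: int_induct[where k="-1"])
  case (step1 i)
  then show ?case
    using d_succ[of i] \<alpha>(1)[of "i + 2"] by (auto simp: divide_pos_pos divide_neg_pos)
next
  case (step2 i)
  have "d (i - 1) = - \<alpha> (i + 1) * d i"
    using d_succ[of "i - 1"] \<alpha>(1)[of "i + 1"] by (simp add: field_simps)
  with step2 show ?case
    using \<alpha>(1)[of "i + 1"] by (auto simp: mult_pos_neg mult_neg_neg)
qed (simp add: d_initial)

lemma abs_d_succ: "\<bar>d (k + 1)\<bar> < \<bar>d k\<bar>"
proof -
  have "d k \<noteq> 0"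
    using d_sign[of k] by (auto split: if_splits)
  then show ?thesis
    using d_succ[of k] \<alpha>(1)[of "k + 2"] by (simp add: abs_divide divide_less_eq)
qed

lemma strict_mono_minus_abs_d: "strict_mono (\<lambda>k. - \<bar>d k\<bar>)"
  by (rule strict_mono_int_succ) (use abs_d_succ in simp)

definition \<nu> :: real where
  "\<nu> = c (period - 1)"

definition \<mu> :: real where
  "\<mu> = d (period - 1)"

lemma \<nu>_gt_1: "1 < \<nu>"
  using strict_monoD[OF strict_mono_c, of "-1" "period - 1"] as_nonempty
  by (simp add: \<nu>_def c_initial)

lemma abs_\<mu>_less_1: "\<bar>\<mu>\<bar> < 1"
  using strict_monoD[OF strict_mono_minus_abs_d, of "-1" "period - 1"] as_nonempty
  by (simp add: \<mu>_def d_initial)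

lemma \<phi>_lls_matrix: "\<phi> (lls_matrix as *v x) = \<nu> * \<phi> x"
proof -
  have "\<phi> (lls_matrix as *v x) = x$1 * c (period - 1) + x$2 * c period"
    using lls_matrix_v[of "-1"] lls_matrix_v[of 0]
    by (subst matrix_vector_mult_basis_2) (simp add: c_def)
  also have "c period = \<beta> (-1) * \<nu>"
    using c_succ[of "period - 1"] \<beta>(3)[of "-1"] by (simp add: \<nu>_def add.commute)
  finally show ?thesis
    by (simp add: \<nu>_def \<phi>_def algebra_simps)
qed

lemma \<psi>_lls_matrix: "\<psi> (lls_matrix as *v x) = \<mu> * \<psi> x"
proof -
  have "\<psi> (lls_matrix as *v x) = x$1 * d (period - 1) + x$2 * d period"
    using lls_matrix_v[of "-1"] lls_matrix_v[of 0]
    by (subst matrix_vector_mult_basis_2) (simp add: d_def)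
  also have "d period = - \<mu> / \<alpha> 1"
    using d_succ[of "period - 1"] \<alpha>(3)[of 1] by (simp add: \<mu>_def add.commute)
  finally show ?thesis
    by (simp add: \<mu>_def \<psi>_def algebra_simps)
qed

lemma lls_matrix_eigen_\<nu>: "\<psi> q = 0 \<Longrightarrow> lls_matrix as *v q = \<nu> *\<^sub>R q"
  using \<phi>_\<psi>_eq_0_imp[of "lls_matrix as *v q - \<nu> *\<^sub>R q"]
  by (simp add: \<phi>_lls_matrix \<psi>_lls_matrix)

lemma lls_matrix_eigen_\<mu>: "\<phi> q = 0 \<Longrightarrow> lls_matrix as *v q = \<mu> *\<^sub>R q"
  using \<phi>_\<psi>_eq_0_imp[of "lls_matrix as *v q - \<mu> *\<^sub>R q"]
  by (simp add: \<phi>_lls_matrix \<psi>_lls_matrix)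

lemma eigenvalue_lls_matrix_irrational:
  assumes "lls_matrix as *v q = l *\<^sub>R q" "q \<noteq> 0" "\<bar>l\<bar> \<noteq> 1"
  shows "l \<notin> \<rat>"
  using unimodular_rational_eigenvalue[OF int_matrix_lls_matrix _ assms(1,2)] assms(3)
  by (auto simp: det_lls_matrix power_abs)

lemma \<phi>_\<psi>_int_point_nonzero:
  assumes "is_int_point q" "q \<noteq> 0"
  shows "\<phi> q \<noteq> 0" "\<psi> q \<noteq> 0"
proof -
  have "l \<notin> \<rat>" if "lls_matrix as *v q = l *\<^sub>R q" "\<bar>l\<bar> \<noteq> 1" for l
    using eigenvalue_lls_matrix_irrational[OF that(1) assms(2) that(2)] .
  moreover have "l \<in> \<rat>" if "lls_matrix as *v q = l *\<^sub>R q" for l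
    using int_matrix_rational_eigenvalue[OF int_matrix_lls_matrix assms that] .
  ultimately show "\<phi> q \<noteq> 0" "\<psi> q \<noteq> 0"
    using lls_matrix_eigen_\<mu> lls_matrix_eigen_\<nu> abs_\<mu>_less_1 \<nu>_gt_1 by force+
qed

definition eigvec_\<mu> :: "real^2" where
  "eigvec_\<mu> = vector [- \<beta> (-1), 1]"

definition eigvec_\<nu> :: "real^2" where
  "eigvec_\<nu> = vector [1, \<alpha> 1]"

lemma \<phi>_eigvec_\<mu>: "\<phi> eigvec_\<mu> = 0" and \<psi>_eigvec_\<nu>: "\<psi> eigvec_\<nu> = 0"
  using \<alpha>(1)[of 1] by (simp_all add: \<phi>_def \<psi>_def eigvec_\<mu>_def eigvec_\<nu>_def)

lemma det2_eigvec_neg: "det2 eigvec_\<mu> eigvec_\<nu> < 0"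
proof -
  have "0 < \<beta> (-1) * \<alpha> 1"
    using \<alpha>(1)[of 1] \<beta>(1)[of "-1"] by simp
  then show ?thesis
    by (simp add: det2_def eigvec_\<mu>_def eigvec_\<nu>_def)
qed

lemma angle_set_eigvec: "angle_set eigvec_\<mu> eigvec_\<nu> = {q. 0 \<le> \<phi> q \<and> \<psi> q \<le> 0}"
proof (intro set_eqI)
  fix q
  have "det2 q eigvec_\<nu> = \<alpha> 1 * \<psi> q" "det2 eigvec_\<mu> q = - \<phi> q"
    using \<alpha>(1)[of 1] by (simp_all add: det2_def eigvec_\<mu>_def eigvec_\<nu>_def \<phi>_def \<psi>_def field_simps)
  then show "q \<in> angle_set eigvec_\<mu> eigvec_\<nu> \<longleftrightarrow> q \<in> {q. 0 \<le> \<phi> q \<and> \<psi> q \<le> 0}"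
    using det2_eigvec_neg \<alpha>(1)[of 1]
    by (auto simp: angle_set_iff_cramer zero_le_divide_iff divide_le_0_iff mult_le_0_iff)
qed

definition sail_points :: "(real^2) set" where
  "sail_points = {q. 0 \<le> \<phi> q \<and> \<psi> q \<le> 0 \<and> is_int_point q \<and> q \<noteq> 0}"

lemma sail_hull_eigvec: "sail_hull eigvec_\<mu> eigvec_\<nu> = convex hull sail_points"
  by (simp add: sail_hull_def angle_set_eigvec sail_points_def conj_assoc)

lemma sail_points_strict: "q \<in> sail_points \<Longrightarrow> 0 < \<phi> q \<and> \<psi> q < 0"
  using \<phi>_\<psi>_int_point_nonzero by (force simp: sail_points_def)

lemma sail_points_cone:
  assumes "is_int_point q" "q \<noteq> 0" "q = s *\<^sub>R x + t *\<^sub>R y"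
    and "x \<in> sail_points" "y \<in> sail_points" "0 \<le> s" "0 \<le> t"
  shows "q \<in> sail_points"
proof -
  have "0 \<le> s * \<phi> x + t * \<phi> y" "s * \<psi> x + t * \<psi> y \<le> 0"
    using assms(4-7) sail_points_strict[of x] sail_points_strict[of y]
    by (simp_all add: add_nonpos_nonpos mult_nonneg_nonpos)
  then show ?thesis
    using assms(1-3) by (simp add: sail_points_def)
qed

lemma sail_points_add:
  assumes "p \<in> sail_points" "q \<in> sail_points"
  shows "p + q \<in> sail_points"
proof -
  have "0 < \<phi> (p + q)" "\<psi> (p + q) < 0"
    using sail_points_strict[OF assms(1)] sail_points_strict[OF assms(2)] by simp_all
  moreover have "p + q \<noteq> 0"
  proof
    assume "p + q = 0"
    with \<open>0 < \<phi> (p + q)\<close> show False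
      by simp
  qed
  ultimately show ?thesis
    using assms by (simp add: sail_points_def is_int_point_add)
qed

lemma v_even_sail_point: "v (2 * j) \<in> sail_points"
proof -
  have "0 < \<phi> (v (2 * j))" "\<psi> (v (2 * j)) < 0"
    using c_pos[of "2 * j"] d_sign[of "2 * j"] by (simp_all add: c_def d_def)
  then show ?thesis
    using is_int_point_v by (auto simp: sail_points_def)
qed

lemma one_le_det2_v_odd:
  assumes "odd k" "q \<in> sail_points"
  shows "1 \<le> det2 (v k) q"
proof -
  have "c k * \<psi> q < 0" "0 < d k * \<phi> q"
    using assms d_sign[of k] c_pos[of k] sail_points_strict[of q] by (simp_all add: mult_pos_neg)
  then have "0 < d k * \<phi> q - c k * \<psi> q"
    by linarith
  then have "0 < \<sigma> * det2 (v k) q"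
    using det2_\<phi>_\<psi>[of "v k" q] by (simp add: c_def d_def)
  then have "0 < det2 (v k) q"
    using \<sigma>_pos by (simp add: zero_less_mult_iff)
  moreover have "det2 (v k) q \<in> \<int>"
    using assms(2) is_int_point_v by (simp add: sail_points_def det2_Ints)
  ultimately show ?thesis
    by (rule Ints_pos_ge_1[rotated])
qed

lemma c_ge: "real m \<le> c (int m)"
proof (induction m)
  case 0
  then show ?case using c_pos[of 0] by simp
next
  case (Suc m)
  have "1 \<le> c (int m - 1)"
    using strict_mono_less_eq[OF strict_mono_c, of "-1" "int m - 1"] by (simp add: c_initial)
  moreover have "c (int m) \<le> real (b (int m + 1)) * c (int m)"
    using b_ge_1 c_pos[of "int m"] by simp
  ultimately show ?case
    using c_rec[of "int m"] Suc.IH by (simp add: add.commute)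
qed

lemma c_le_1: "k \<le> -1 \<Longrightarrow> c k \<le> 1"
  using strict_mono_less_eq[OF strict_mono_c, of k "-1"] by (simp add: c_initial)

lemma abs_d_le_1: "-1 \<le> k \<Longrightarrow> \<bar>d k\<bar> \<le> 1"
  using strict_mono_less_eq[OF strict_mono_minus_abs_d, of "-1" k] by (simp add: d_initial)

lemma abs_d_ge: "real m \<le> \<bar>d (-2 - int m)\<bar>"
proof (induction m)
  case (Suc m)
  define k where "k = -2 - int m"
  have "d (k - 1) = d (k + 1) - real (b (k + 1)) * d k"
    using d_rec[of k] by simp
  moreover have "(d (k + 1) < 0 \<and> 0 < d k \<and> d (k - 1) < 0) \<or> (0 < d (k + 1) \<and> d k < 0 \<and> 0 < d (k - 1))"
    using d_sign[of k] d_sign[of "k + 1"] d_sign[of "k - 1"] by (auto split: if_splits)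
  ultimately have "\<bar>d (k - 1)\<bar> = \<bar>d (k + 1)\<bar> + real (b (k + 1)) * \<bar>d k\<bar>"
    using b_ge_1[of "k + 1"] by (auto simp: abs_mult)
  moreover have "1 \<le> \<bar>d (k + 1)\<bar>"
    using strict_mono_less_eq[OF strict_mono_minus_abs_d, of "k + 1" "-1"] by (simp add: k_def d_initial)
  moreover have "\<bar>d k\<bar> \<le> real (b (k + 1)) * \<bar>d k\<bar>"
    using b_ge_1[of "k + 1"] by (simp add: mult_le_cancel_right1)
  ultimately show ?case
    using Suc.IH by (simp add: k_def algebra_simps)
qed simp

lemma det2_v_even_pos:
  assumes "q \<in> sail_points" "\<phi> q < real m * - \<psi> q"
  shows "0 < det2 (v (2 * int m)) q"
proof -
  have q: "0 < \<phi> q" "0 < - \<psi> q"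
    using sail_points_strict[OF assms(1)] by simp_all
  have "real m * - \<psi> q \<le> c (2 * int m) * - \<psi> q"
    using c_ge[of "2 * m"] q by (intro mult_right_mono) auto
  moreover have "- \<phi> q \<le> d (2 * int m) * \<phi> q"
    using mult_right_mono[of "-1" "d (2 * int m)" "\<phi> q"] abs_d_le_1[of "2 * int m"] q by simp
  ultimately have "0 < \<sigma> * det2 (v (2 * int m)) q"
    using assms(2) det2_\<phi>_\<psi>[of "v (2 * int m)" q] by (simp add: c_def d_def)
  then show ?thesis
    using \<sigma>_pos by (simp add: zero_less_mult_iff)
qed

lemma det2_v_even_neg:
  assumes "q \<in> sail_points" "- \<psi> q < real m * \<phi> q"
  shows "det2 (v (-2 - 2 * int m)) q < 0"
proof -
  have q: "0 < \<phi> q" "0 < - \<psi> q"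
    using sail_points_strict[OF assms(1)] by simp_all
  have "real m * \<phi> q \<le> - d (-2 - 2 * int m) * \<phi> q"
    using abs_d_ge[of "2 * m"] d_sign[of "-2 - 2 * int m"] q by (intro mult_right_mono) auto
  moreover have "c (-2 - 2 * int m) * - \<psi> q \<le> - \<psi> q"
    using c_le_1[of "-2 - 2 * int m"] q by simp
  ultimately have "\<sigma> * det2 (v (-2 - 2 * int m)) q < 0"
    using assms(2) det2_\<phi>_\<psi>[of "v (-2 - 2 * int m)" q] by (simp add: c_def d_def)
  then show ?thesis
    using \<sigma>_pos by (simp add: mult_less_0_iff)
qed

text \<open>The determinant against \<open>v (2 * j)\<close> changes sign because \<open>c\<close> grows to the right and
  \<open>\<bar>d\<bar>\<close> grows to the left.\<close>
lemma sail_points_sector: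
  assumes "q \<in> sail_points"
  obtains j where "det2 (v (2 * j)) q \<le> 0" "0 < det2 (v (2 * j + 2)) q"
proof -
  have q: "0 < \<phi> q" "0 < - \<psi> q"
    using sail_points_strict[OF assms] by simp_all
  obtain m :: nat where "\<phi> q / - \<psi> q < real m"
    using reals_Archimedean2 by blast
  then have "\<phi> q < real m * - \<psi> q"
    by (simp only: pos_divide_less_eq[OF q(2)])
  then have "0 < det2 (v (2 * int m)) q"
    by (rule det2_v_even_pos[OF assms])
  moreover obtain m' :: nat where "- \<psi> q / \<phi> q < real m'"
    using reals_Archimedean2 by blast
  then have "- \<psi> q < real m' * \<phi> q"
    by (simp only: pos_divide_less_eq[OF q(1)])
  then have "det2 (v (-2 - 2 * int m')) q < 0"
    by (rule det2_v_even_neg[OF assms])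
  then have "det2 (v (2 * (-1 - int m'))) q < 0"
    by (simp add: algebra_simps)
  ultimately obtain j where "det2 (v (2 * j)) q \<le> 0" "0 < det2 (v (2 * (j + 1))) q"
    using int_sign_change[of "\<lambda>j. det2 (v (2 * j)) q" "-1 - int m'" "int m"] by force
  then show ?thesis
    using that by simp
qed

lemma v_even_neq: "v (2 * j) \<noteq> v (2 * j + 2)"
  using strict_monoD[OF strict_mono_c, of "2 * j" "2 * j + 2"] by (auto simp: c_def)

text \<open>On the sail points, the linear form \<open>det2 (v (2k - 1)) x + det2 (v (2k + 1)) x\<close> is
  an integer \<open>\<ge> 2\<close>, with equality only at \<open>v (2k)\<close>.\<close>
lemma v_even_extreme_point: "v (2 * k) extreme_point_of (convex hull sail_points)"
proof (rule extreme_point_of_convex_hull_strict_minimizer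
    [where g="\<lambda>x. det2 (v (2 * k - 1)) x + det2 (v (2 * k + 1)) x"])
  show "linear (\<lambda>x. det2 (v (2 * k - 1)) x + det2 (v (2 * k + 1)) x)"
    by (auto intro!: linearI simp: det2_def algebra_simps)
  show "v (2 * k) \<in> sail_points"
    by (rule v_even_sail_point)
  fix x
  assume x: "x \<in> sail_points" "x \<noteq> v (2 * k)"
  have left: "det2 (v (2 * k - 1)) (v (2 * k)) = 1" and right: "det2 (v (2 * k + 1)) (v (2 * k)) = 1"
    using det2_v[of "2 * k - 1"] det2_v[of "2 * k"] det2_commute[of "v (2 * k + 1)"] by simp_all
  have ge: "1 \<le> det2 (v (2 * k - 1)) x" "1 \<le> det2 (v (2 * k + 1)) x"
    using one_le_det2_v_odd x(1) by simp_all
  have "det2 (v (2 * k - 1)) x \<noteq> 1 \<or> det2 (v (2 * k + 1)) x \<noteq> 1"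
  proof (rule ccontr)
    assume "\<not> ?thesis"
    then have "det2 (v (2 * k - 1)) (x - v (2 * k)) = 0" "det2 (v (2 * k + 1)) (x - v (2 * k)) = 0"
      using left right by (simp_all add: det2_def algebra_simps)
    moreover have "det2 (v (2 * k - 1)) (v (2 * k + 1)) \<noteq> 0"
      using det2_v_step2[of "2 * k - 1"] det2_v[of "2 * k - 1"] b_pos[of "2 * k + 1"]
      by (simp add: algebra_simps)
    ultimately have "x - v (2 * k) = 0"
      by (rule det2_eq_0_imp_eq_0[rotated])
    with x(2) show False
      by simp
  qed
  with ge left right
  show "det2 (v (2 * k - 1)) (v (2 * k)) + det2 (v (2 * k + 1)) (v (2 * k))
      < det2 (v (2 * k - 1)) x + det2 (v (2 * k + 1)) x"
    by linarith
qed

lemma not_extreme_point_sail_points_diff: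
  assumes "p \<in> sail_points" "a \<in> sail_points" "p - a \<in> sail_points"
  shows "\<not> p extreme_point_of (convex hull sail_points)"
proof (rule not_extreme_point_of_midpoint)
  show "p - a \<in> convex hull sail_points" "p + a \<in> convex hull sail_points"
    using assms sail_points_add by (simp_all add: hull_inc)
  show "a \<noteq> 0"
    using assms(2) by (simp add: sail_points_def)
qed

text \<open>The coordinates of a sail point in the sector spanned by \<open>v (2j)\<close> and \<open>v (2j + 2)\<close> add up
  to the integer \<open>det2 (v (2j + 1)) p\<close>.\<close>
lemma sail_points_sector_coordinates:
  assumes p: "p \<in> sail_points" and j: "det2 (v (2 * j)) p \<le> 0" "0 < det2 (v (2 * j + 2)) p"
  obtains s t where "p = s *\<^sub>R v (2 * j) + t *\<^sub>R v (2 * j + 2)" "0 < s" "0 \<le> t" "s + t \<in> \<int>"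
proof -
  define a where "a = v (2 * j)"
  define a' where "a' = v (2 * j + 2)"
  define B where "B = real (b (2 * j + 2))"
  define s where "s = det2 a' p / B"
  define t where "t = - det2 a p / B"
  have "0 < B"
    using b_pos by (simp add: B_def)
  then have st: "0 < s" "0 \<le> t"
    using j by (simp_all add: s_def t_def a_def a'_def divide_nonpos_pos)
  have "det2 a a' = - B"
    using det2_v_step2[of "2 * j"] det2_v[of "2 * j"] by (simp add: a_def a'_def B_def)
  then have "p = (det2 p a' / - B) *\<^sub>R a + (det2 a p / - B) *\<^sub>R a'"
    using cramer_2[of a a' p] \<open>0 < B\<close> by simp
  then have p_eq: "p = s *\<^sub>R a + t *\<^sub>R a'"
    using det2_commute[of p a'] by (simp add: s_def t_def)
  have "det2 (v (2 * j + 1)) a = 1" "det2 (v (2 * j + 1)) a' = 1"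
    using det2_v[of "2 * j"] det2_v[of "2 * j + 1"]
    by (simp_all add: a_def a'_def add.assoc det2_commute[of "v (2 * j + 1)" "v (2 * j)"])
  then have "s + t = det2 (v (2 * j + 1)) p"
    unfolding p_eq by (simp add: det2_def algebra_simps)
  then have "s + t \<in> \<int>"
    using p is_int_point_v by (simp add: sail_points_def det2_Ints)
  with p_eq st show ?thesis
    using that by (simp add: a_def a'_def)
qed

text \<open>If one of the coordinates is \<open>\<ge> 1\<close>, subtracting the corresponding vertex leaves a sail point;
  otherwise the integer sum of the coordinates is \<open>1\<close> and \<open>p\<close> lies on the edge.\<close>
lemma extreme_point_sail_points_v_even:
  assumes "p extreme_point_of (convex hull sail_points)"
  shows "p \<in> range (\<lambda>k. v (2 * k))"
proof (rule ccontr)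
  assume not_v: "p \<notin> range (\<lambda>k. v (2 * k))"
  have p: "p \<in> sail_points"
    using extreme_point_of_convex_hull[OF assms] .
  then obtain j where "det2 (v (2 * j)) p \<le> 0" "0 < det2 (v (2 * j + 2)) p"
    by (rule sail_points_sector)
  with p obtain s t where p_eq: "p = s *\<^sub>R v (2 * j) + t *\<^sub>R v (2 * j + 2)"
    and st: "0 < s" "0 \<le> t" "s + t \<in> \<int>"
    by (rule sail_points_sector_coordinates)
  define a where "a = v (2 * j)"
  define a' where "a' = v (2 * j + 2)"
  have "a = (\<lambda>k. v (2 * k)) j" "a' = (\<lambda>k. v (2 * k)) (j + 1)"
    by (simp_all add: a_def a'_def)
  then have a: "a \<in> sail_points" "p \<noteq> a" and a': "a' \<in> sail_points" "p \<noteq> a'"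
    using v_even_sail_point[of j] v_even_sail_point[of "j + 1"] not_v by (metis rangeI)+
  have int_p: "is_int_point p"
    using p by (simp add: sail_points_def)
  consider "1 \<le> s" | "1 \<le> t" | "s < 1" "t < 1"
    by linarith
  then show False
  proof cases
    case 1
    have "p - a \<in> sail_points"
      by (rule sail_points_cone[of _ "s - 1" a t a'])
        (use 1 st a a' int_p in \<open>simp_all add: p_eq a_def a'_def algebra_simps is_int_point_diff is_int_point_v\<close>)
    then show False
      using not_extreme_point_sail_points_diff[OF p a(1)] assms by blast
  next
    case 2
    have "p - a' \<in> sail_points"
      by (rule sail_points_cone[of _ s a "t - 1" a'])
        (use 2 st a a' int_p in \<open>simp_all add: p_eq a_def a'_def algebra_simps is_int_point_diff is_int_point_v\<close>)
    then show False
      using not_extreme_point_sail_points_diff[OF p a'(1)] assms by blast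
  next
    case 3
    have "s + t = 1"
      using st 3 by (auto elim!: Ints_cases)
    with 3 have "0 < t" "t < 1" "s = 1 - t"
      by linarith+
    then have "p \<in> open_segment a a'"
      using v_even_neq[of j] p_eq by (auto simp: in_segment a_def a'_def)
    moreover have "a \<in> convex hull sail_points" "a' \<in> convex hull sail_points"
      using a a' by (simp_all add: hull_inc)
    ultimately show False
      using assms by (auto simp: extreme_point_of_def)
  qed
qed

lemma sail_vertices_eigvec: "sail_vertices eigvec_\<mu> eigvec_\<nu> = range (\<lambda>k. v (2 * k))"
  unfolding sail_vertices_def sail_hull_eigvec
  using v_even_extreme_point extreme_point_sail_points_v_even by blast

lemma inj_v_even: "inj (\<lambda>k. v (2 * k))"
proof (rule injI)
  fix k l
  assume "v (2 * k) = v (2 * l)"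
  then have "c (2 * k) = c (2 * l)"
    by (simp add: c_def)
  then show "k = l"
    using strict_mono_eq[OF strict_mono_c] by simp
qed

lemma lls_v_even: "lls (\<lambda>k. v (2 * k)) j = real (b (j + 2))"
proof (cases "even j")
  case True
  then have "2 * (j div 2) = j" "2 * (j div 2 + 1) = j + 2"
    by simp_all
  then show ?thesis
    using True abs_det2_v_step2[of j] by (simp add: lls_def)
next
  case False
  then obtain h where j: "j = 2 * h + 1"
    by (rule oddE)
  have left: "v (2 * h) - v (2 * h + 2) = - (real (b (2 * h + 2)) *\<^sub>R v (2 * h + 1))"
    using v_step2[of "2 * h"] by (metis minus_diff_eq)
  have right: "v (2 * h + 4) - v (2 * h + 2) = real (b (2 * h + 4)) *\<^sub>R v (2 * h + 3)"
    using v_step2[of "2 * h + 2"] by (simp add: add.assoc)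
  have "det2 (v (2 * h) - v (2 * h + 2)) (v (2 * h + 4) - v (2 * h + 2)) =
      - (real (b (2 * h + 2)) * real (b (2 * h + 4))) * det2 (v (2 * h + 1)) (v (2 * h + 3))"
    unfolding left right by (simp add: det2_def algebra_simps)
  moreover have "\<bar>det2 (v (2 * h + 1)) (v (2 * h + 3))\<bar> = real (b (2 * h + 3))"
    "\<bar>det2 (v (2 * h)) (v (2 * h + 2))\<bar> = real (b (2 * h + 2))"
    "\<bar>det2 (v (2 * h + 2)) (v (2 * h + 4))\<bar> = real (b (2 * h + 4))"
    using abs_det2_v_step2[of "2 * h + 1"] abs_det2_v_step2[of "2 * h"] abs_det2_v_step2[of "2 * h + 2"]
    by (simp_all add: add.assoc)
  ultimately show ?thesis
    using b_pos[of "2 * h + 2"] b_pos[of "2 * h + 4"]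
    by (simp add: lls_def j abs_mult add.assoc)
qed

lemma lls_period_lls_matrix: "lls_period (lls_matrix as) as"
proof -
  have eig: "lls_matrix as *v eigvec_\<mu> = \<mu> *\<^sub>R eigvec_\<mu>" "lls_matrix as *v eigvec_\<nu> = \<nu> *\<^sub>R eigvec_\<nu>"
    by (simp_all add: lls_matrix_eigen_\<mu> lls_matrix_eigen_\<nu> \<phi>_eigvec_\<mu> \<psi>_eigvec_\<nu>)
  have nonzero: "eigvec_\<mu> \<noteq> 0" "eigvec_\<nu> \<noteq> 0"
    by (simp_all add: eigvec_\<mu>_def eigvec_\<nu>_def vec2_eq_iff)
  have "\<nu> \<notin> \<rat>" "\<mu> \<notin> \<rat>" "\<nu> \<noteq> \<mu>"
    using eigenvalue_lls_matrix_irrational[OF eig(2) nonzero(2)]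
      eigenvalue_lls_matrix_irrational[OF eig(1) nonzero(1)] \<nu>_gt_1 abs_\<mu>_less_1 by auto
  then have "distinct_irrational_real_eigenvalues (lls_matrix as)"
    unfolding distinct_irrational_real_eigenvalues_def using eig nonzero by blast
  moreover have "associated_angle (lls_matrix as) eigvec_\<mu> eigvec_\<nu>"
    using eig det2_eigvec_neg by (auto simp: associated_angle_def)
  moreover have "0 < det2 eigvec_\<mu> eigvec_\<nu> * det2 (v (2 * k)) (v (2 * (k + 1)))" for k
  proof -
    have "det2 (v (2 * k)) (v (2 * k + 2)) < 0"
      using det2_v_step2[of "2 * k"] det2_v[of "2 * k"] b_pos[of "2 * k + 2"] by simp
    then show ?thesis
      using det2_eigvec_neg by (simp add: mult_neg_neg distrib_left)
  qed
  then have "sail_param eigvec_\<mu> eigvec_\<nu> (\<lambda>k. v (2 * k))"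
    using inj_v_even by (simp add: sail_param_def sail_vertices_eigvec bij_betw_def)
  moreover have "(lls_matrix as ** lls_matrix as) *v v (2 * k) = v (2 * (k + period))" for k
    by (simp add: matrix_vector_mul_assoc[symmetric] lls_matrix_v algebra_simps)
  moreover have "lls (\<lambda>k. v (2 * k)) (-1 + int i) = real (b (int i + 1))" for i
    using lls_v_even[of "-1 + int i"] by (simp add: algebra_simps)
  then have "\<forall>i < length as. lls (\<lambda>k. v (2 * k)) (-1 + int i) = real (as ! i)"
    by (simp add: b_nth)
  ultimately show ?thesis
    unfolding lls_period_def using as_nonempty
    by (intro conjI exI[of _ eigvec_\<mu>] exI[of _ eigvec_\<nu>] exI[of _ "\<lambda>k. v (2 * k)"]
        exI[of _ period] exI[of _ "-1"]) auto
qed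

end

theorem theorem2:
  fixes as :: "nat list"
  assumes "as \<noteq> []"
    and "\<forall>a \<in> set as. 0 < a"
  shows "lls_period (lls_matrix as) as"
proof -
  interpret lls_list as
    using assms by unfold_locales
  show ?thesis
    by (rule lls_period_lls_matrix)
qed

end
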